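(* Let $A$ be a complex semisimple Banach algebra with a unit, and suppose that $\mathrm{Soc}(A)\neq\{0\}$. Then $\mathrm{Soc}(A)$, regarded as a normed algebra with the norm of $A$, has a two-sided approximate identity. *)

theory Defs
  imports "HOL-Analysis.Analysis"
begin

text \<open>HOL-Analysis only provides real normed
algebras, so we add a complex scalar multiplication compatible with the real one,
with the norm and with the multiplication.  The unit is not required to have norm 1.\<close>

class complex_banach_algebra_1 = real_normed_algebra + real_algebra_1 + banach +
  fixes scaleC :: "complex \<Rightarrow> 'a \<Rightarrow> 'a"
  assumes scaleC_add_right: "scaleC c (x + y) = scaleC c x + scaleC c y"
    and scaleC_add_left: "scaleC (c + d) x = scaleC c x + scaleC d x"
    and scaleC_scaleC: "scaleC c (scaleC d x) = scaleC (c * d) x"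
    and scaleC_one: "scaleC 1 x = x"
    and scaleR_scaleC: "scaleR r x = scaleC (complex_of_real r) x"
    and norm_scaleC: "norm (scaleC c x) = norm c * norm x"
    and mult_scaleC_left: "scaleC c x * y = scaleC c (x * y)"
    and mult_scaleC_right: "x * scaleC c y = scaleC c (x * y)"

definition left_ideal :: "'a::complex_banach_algebra_1 set \<Rightarrow> bool" where
  "left_ideal L \<longleftrightarrow> 0 \<in> L \<and> (\<forall>x\<in>L. \<forall>y\<in>L. x + y \<in> L) \<and>
     (\<forall>c. \<forall>x\<in>L. scaleC c x \<in> L) \<and> (\<forall>a. \<forall>x\<in>L. a * x \<in> L)"

definition maximal_left_ideal :: "'a::complex_banach_algebra_1 set \<Rightarrow> bool" where
  "maximal_left_ideal L \<longleftrightarrow> left_ideal L \<and> L \<noteq> UNIV \<and>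
     (\<forall>M. left_ideal M \<and> L \<subseteq> M \<and> M \<noteq> UNIV \<longrightarrow> M = L)"

definition minimal_left_ideal :: "'a::complex_banach_algebra_1 set \<Rightarrow> bool" where
  "minimal_left_ideal L \<longleftrightarrow> left_ideal L \<and> L \<noteq> {0} \<and>
     (\<forall>M. left_ideal M \<and> M \<subseteq> L \<and> M \<noteq> {0} \<longrightarrow> M = L)"

definition jacobson_radical :: "'a::complex_banach_algebra_1 set" where
  "jacobson_radical = \<Inter> {L. maximal_left_ideal L}"

definition semisimple :: "'a::complex_banach_algebra_1 itself \<Rightarrow> bool" where
  "semisimple _ \<longleftrightarrow> (jacobson_radical :: 'a set) = {0}"

text \<open>Socle: the sum of all minimal left ideals (= set of finite sums of elements
of minimal left ideals; it is {0} if there are no minimal left ideals).\<close>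
definition socle :: "'a::complex_banach_algebra_1 set" where
  "socle = {sum_list xs | xs. \<forall>x\<in>set xs. \<exists>L. minimal_left_ideal L \<and> x \<in> L}"

text \<open>Nets in 'a are represented, as usual in Isabelle, by proper filters on 'a
(the filter generated by the tails of the net).\<close>
definition has_two_sided_approx_identity :: "'a::complex_banach_algebra_1 set \<Rightarrow> bool" where
  "has_two_sided_approx_identity S \<longleftrightarrow>
     (\<exists>F :: 'a filter. F \<noteq> bot \<and> eventually (\<lambda>e. e \<in> S) F \<and>
        (\<forall>a\<in>S. ((\<lambda>e. e * a) \<longlongrightarrow> a) F \<and> ((\<lambda>e. a * e) \<longlongrightarrow> a) F))"

end

theory Submission
  imports Defs
begin

text \<open>In a semisimple algebra \<open>x A x = 0\<close> forces \<open>x = 0\<close>, and from this every element \<open>z\<close> of a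
  minimal left ideal is von Neumann regular, \<open>z c z = z\<close>. Since elements of minimal left ideals
  stay in minimal left ideals (or vanish) under multiplication on either side, finitely many of
  them admit an idempotent right unit \<open>u\<close> in the socle, built one element at a time by absorbing
  the idempotent \<open>c (z - z u)\<close>, and symmetrically an idempotent left unit \<open>v\<close>; then
  \<open>u + v - u v\<close> is a two-sided unit for them. So every finite subset of the socle has a unit in
  the socle, and these units, indexed by the finite subsets, form an approximate identity that
  is eventually constant at each element.\<close>

lemma scaleC_zero_right [simp]: "scaleC c (0::'a::complex_banach_algebra_1) = 0"
  using scaleC_add_right[of c "0::'a" 0] by simp

lemma left_ideal_zero: "left_ideal {0::'a::complex_banach_algebra_1}"
  by (simp add: left_ideal_def)

lemma left_ideal_UNIV: "left_ideal (UNIV :: 'a::complex_banach_algebra_1 set)"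
  by (simp add: left_ideal_def)

lemma left_ideal_diff: "left_ideal L \<Longrightarrow> x \<in> L \<Longrightarrow> y \<in> L \<Longrightarrow> x - y \<in> L"
  unfolding left_ideal_def by (metis diff_conv_add_uminus mult_minus1)

lemma left_ideal_sum:
  assumes M: "left_ideal M" and N: "left_ideal N"
  shows "left_ideal {m + n | m n. m \<in> M \<and> n \<in> N}"
  unfolding left_ideal_def
proof (intro conjI ballI allI; clarify?)
  show "\<exists>m n. 0 = m + n \<and> m \<in> M \<and> n \<in> N"
    using M N by (intro exI[of _ 0]) (auto simp: left_ideal_def)
next
  fix m n m' n' assume "m \<in> M" "n \<in> N" "m' \<in> M" "n' \<in> N"
  then show "\<exists>m'' n''. m + n + (m' + n') = m'' + n'' \<and> m'' \<in> M \<and> n'' \<in> N"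
    using M N by (intro exI[of _ "m + m'"] exI[of _ "n + n'"]) (auto simp: left_ideal_def ac_simps)
next
  fix c m n assume "m \<in> M" "n \<in> N"
  then show "\<exists>m' n'. scaleC c (m + n) = m' + n' \<and> m' \<in> M \<and> n' \<in> N"
    using M N by (intro exI[of _ "scaleC c m"] exI[of _ "scaleC c n"])
      (auto simp: left_ideal_def scaleC_add_right)
next
  fix a m n assume "m \<in> M" "n \<in> N"
  then show "\<exists>m' n'. a * (m + n) = m' + n' \<and> m' \<in> M \<and> n' \<in> N"
    using M N by (intro exI[of _ "a * m"] exI[of _ "a * n"]) (auto simp: left_ideal_def distrib_left)
qed

lemma left_ideal_image_mult_right:
  assumes L: "left_ideal L"
  shows "left_ideal ((\<lambda>w. w * c) ` L)"
  unfolding left_ideal_def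
proof (intro conjI ballI allI; clarify?)
  show "0 \<in> (\<lambda>w. w * c) ` L"
    using L by (auto simp: left_ideal_def intro!: image_eqI[of _ _ 0])
next
  fix x y assume "x \<in> L" "y \<in> L"
  then show "x * c + y * c \<in> (\<lambda>w. w * c) ` L"
    using L by (auto simp: left_ideal_def distrib_right intro!: image_eqI[of _ _ "x + y"])
next
  fix d x assume "x \<in> L"
  then show "scaleC d (x * c) \<in> (\<lambda>w. w * c) ` L"
    using L by (auto simp: left_ideal_def mult_scaleC_left intro!: image_eqI[of _ _ "scaleC d x"])
next
  fix a x assume "x \<in> L"
  then show "a * (x * c) \<in> (\<lambda>w. w * c) ` L"
    using L by (auto simp: left_ideal_def mult.assoc intro!: image_eqI[of _ _ "a * x"])
qed

lemma left_ideal_vimage_mult_right: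
  assumes "left_ideal L" "left_ideal M"
  shows "left_ideal {w \<in> L. w * c \<in> M}"
  using assms unfolding left_ideal_def
  by (auto simp: mult_scaleC_left mult.assoc distrib_right)

lemma left_ideal_eq_UNIV_if_one_mem:
  assumes "left_ideal L" "1 \<in> L"
  shows "L = UNIV"
  using assms unfolding left_ideal_def by (metis UNIV_eq_I mult.right_neutral)

lemma maximal_left_ideal_add_principal:
  fixes x :: "'a::complex_banach_algebra_1"
  assumes M: "maximal_left_ideal M" and x: "x \<notin> M"
  obtains m a where "m \<in> M" "m + a * x = 1"
proof -
  define N where "N = {m + n | m n. m \<in> M \<and> n \<in> range (\<lambda>a. a * x)}"
  have LM: "left_ideal M" using M by (simp add: maximal_left_ideal_def)
  have "left_ideal N"
    unfolding N_def by (intro left_ideal_sum LM left_ideal_image_mult_right left_ideal_UNIV)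
  moreover have "M \<subseteq> N"
  proof
    fix m assume "m \<in> M"
    moreover have "0 \<in> range (\<lambda>a. a * x)"
      using rangeI[of "\<lambda>a. a * x" 0] by simp
    moreover have "m = m + 0"
      by simp
    ultimately show "m \<in> N"
      unfolding N_def by blast
  qed
  moreover have "x \<in> N"
  proof -
    have "0 \<in> M" "x = 0 + 1 * x"
      using LM by (simp_all add: left_ideal_def)
    then show ?thesis
      unfolding N_def by blast
  qed
  ultimately have "N = UNIV"
    using M x unfolding maximal_left_ideal_def by blast
  then obtain m n where "m \<in> M" "n \<in> range (\<lambda>a. a * x)" "1 = m + n"
    unfolding N_def by blast
  then show thesis
    using that by (metis rangeE)
qed

text \<open>If every element of the left ideal \<open>A x\<close> squares to zero, then \<open>1 - a x\<close> is invertible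
  with inverse \<open>1 + a x\<close>, so \<open>x\<close> cannot be added to a maximal left ideal.\<close>

lemma mem_jacobson_radical_if_square_zero:
  fixes x :: "'a::complex_banach_algebra_1"
  assumes sq: "\<And>a. a * x * (a * x) = 0"
  shows "x \<in> jacobson_radical"
  unfolding jacobson_radical_def
proof (intro InterI, clarsimp)
  fix M :: "'a set" assume M: "maximal_left_ideal M"
  then have LM: "left_ideal M" and "M \<noteq> UNIV" by (auto simp: maximal_left_ideal_def)
  show "x \<in> M"
  proof (rule ccontr)
    assume "x \<notin> M"
    then obtain m a where m: "m \<in> M" and one: "m + a * x = 1"
      using maximal_left_ideal_add_principal M by blast
    have m_eq: "m = 1 - a * x"
      using one by (simp add: eq_diff_eq)
    have "(1 + a * x) * m = 1 - a * x * (a * x)"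
      unfolding m_eq by (simp add: algebra_simps)
    also have "\<dots> = 1"
      using sq[of a] by simp
    finally have "1 \<in> M"
      using LM m unfolding left_ideal_def by metis
    then show False
      using left_ideal_eq_UNIV_if_one_mem LM \<open>M \<noteq> UNIV\<close> by blast
  qed
qed

lemma semisimple_semiprime:
  fixes x :: "'a::complex_banach_algebra_1"
  assumes "semisimple TYPE('a)" and "\<And>a. x * a * x = 0"
  shows "x = 0"
proof -
  have "a * x * (a * x) = 0" for a
    using assms(2)[of a] by (metis mult.assoc mult_zero_right)
  then have "x \<in> jacobson_radical"
    by (rule mem_jacobson_radical_if_square_zero)
  with assms(1) show ?thesis
    unfolding semisimple_def by blast
qed

lemma minimal_left_ideal_eqI:
  assumes "minimal_left_ideal L" "left_ideal M" "M \<subseteq> L" "x \<in> M" "x \<noteq> 0"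
  shows "M = L"
  using assms unfolding minimal_left_ideal_def by blast

lemma minimal_left_ideal_principal:
  assumes L: "minimal_left_ideal L" and "z \<in> L" "z \<noteq> 0"
  shows "range (\<lambda>b. b * z) = L"
proof (rule minimal_left_ideal_eqI[OF L])
  show "left_ideal (range (\<lambda>b. b * z))"
    by (intro left_ideal_image_mult_right left_ideal_UNIV)
  show "range (\<lambda>b. b * z) \<subseteq> L"
    using L \<open>z \<in> L\<close> by (auto simp: minimal_left_ideal_def left_ideal_def)
  show "1 * z \<in> range (\<lambda>b. b * z)" by (rule rangeI)
  show "1 * z \<noteq> 0" using \<open>z \<noteq> 0\<close> by simp
qed

text \<open>Semiprimeness gives \<open>y = a z \<in> L\<close> with \<open>z y \<noteq> 0\<close>. Then \<open>L y = L\<close>, so \<open>e y = y\<close> for some \<open>e \<in> L\<close>,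
  and right multiplication by \<open>y\<close> is injective on \<open>L\<close>; hence \<open>z e = z\<close>, and \<open>e \<in> L = A z\<close>.\<close>

lemma minimal_left_ideal_regular:
  fixes z :: "'a::complex_banach_algebra_1"
  assumes ss: "semisimple TYPE('a)" and L: "minimal_left_ideal L" and zL: "z \<in> L"
  obtains c where "z * c * z = z"
proof (cases "z = 0")
  case True
  then show thesis using that by simp
next
  case False
  have LL: "left_ideal L" using L by (simp add: minimal_left_ideal_def)
  obtain a where "z * a * z \<noteq> 0"
    using semisimple_semiprime[OF ss] False by blast
  define y where "y = a * z"
  have yL: "y \<in> L" using LL zL unfolding y_def left_ideal_def by blast
  have zy: "z * y \<noteq> 0" using \<open>z * a * z \<noteq> 0\<close> by (simp add: y_def mult.assoc)
  have "(\<lambda>w. w * y) ` L = L"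
  proof (rule minimal_left_ideal_eqI[OF L left_ideal_image_mult_right[OF LL]])
    show "(\<lambda>w. w * y) ` L \<subseteq> L" using LL yL unfolding left_ideal_def by blast
  qed (use zL zy in auto)
  then obtain e where eL: "e \<in> L" and ey: "e * y = y"
    using yL by (metis (no_types, lifting) imageE)
  have annihilator: "w = 0" if "w \<in> L" "w * y = 0" for w
  proof (rule ccontr)
    assume "w \<noteq> 0"
    have "{w \<in> L. w * y \<in> {0}} = L"
      by (rule minimal_left_ideal_eqI[where x = w, OF L left_ideal_vimage_mult_right[OF LL left_ideal_zero]])
        (use that \<open>w \<noteq> 0\<close> in auto)
    then have "e * y = 0" using eL by blast
    then have "y = 0" using ey by simp
    then show False using zy by simp
  qed
  have "z * e - z \<in> L"
    using LL eL zL by (intro left_ideal_diff) (auto simp: left_ideal_def)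
  moreover have "(z * e - z) * y = 0"
    using ey by (simp add: algebra_simps mult.assoc)
  ultimately have "z * e - z = 0"
    by (rule annihilator)
  then have ze: "z * e = z"
    by simp
  obtain c where "e = c * z"
    using minimal_left_ideal_principal[OF L zL False] eL by blast
  then have "z * c * z = z"
    using ze by (simp add: mult.assoc)
  then show thesis by (rule that)
qed

lemma minimal_left_ideal_mult_right:
  assumes L: "minimal_left_ideal L"
  shows "(\<lambda>w. w * c) ` L = {0} \<or> minimal_left_ideal ((\<lambda>w. w * c) ` L)"
proof -
  have LL: "left_ideal L" using L by (simp add: minimal_left_ideal_def)
  have "(\<lambda>w. w * c) ` L \<subseteq> M"
    if M: "left_ideal M" "M \<subseteq> (\<lambda>w. w * c) ` L" "M \<noteq> {0}" for M
  proof -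
    obtain m where "m \<in> M" "m \<noteq> 0"
      using M by (auto simp: left_ideal_def)
    then obtain w where "w \<in> L" "w * c = m"
      using M by blast
    have "{w \<in> L. w * c \<in> M} = L"
      by (rule minimal_left_ideal_eqI[where x = w, OF L left_ideal_vimage_mult_right[OF LL M(1)]])
        (use \<open>w \<in> L\<close> \<open>w * c = m\<close> \<open>m \<in> M\<close> \<open>m \<noteq> 0\<close> in auto)
    then show ?thesis by blast
  qed
  then show ?thesis
    using left_ideal_image_mult_right[OF LL] unfolding minimal_left_ideal_def by blast
qed

text \<open>The zero element is included explicitly, because \<open>L c\<close> may vanish for a minimal left
  ideal \<open>L\<close>, and because the algebra need not have any minimal left ideal.\<close>

definition socle_generators :: "'a::complex_banach_algebra_1 set" where
  "socle_generators = insert 0 (\<Union> {L. minimal_left_ideal L})"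

lemma socle_generators_mult_left:
  assumes "x \<in> socle_generators"
  shows "a * x \<in> socle_generators"
proof (cases "x = 0")
  case False
  then obtain L where "minimal_left_ideal L" "x \<in> L"
    using assms unfolding socle_generators_def by blast
  then have "a * x \<in> L"
    by (simp add: minimal_left_ideal_def left_ideal_def)
  with \<open>minimal_left_ideal L\<close> show ?thesis
    unfolding socle_generators_def by blast
qed (simp add: socle_generators_def)

lemma socle_generators_mult_right:
  assumes "x \<in> socle_generators"
  shows "x * c \<in> socle_generators"
proof (cases "x = 0")
  case False
  then obtain L where "minimal_left_ideal L" "x \<in> L"
    using assms unfolding socle_generators_def by blast
  then have "x * c \<in> (\<lambda>w. w * c) ` L" "minimal_left_ideal L"
    by auto
  then show ?thesis
    using minimal_left_ideal_mult_right[of L c] unfolding socle_generators_def by blast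
qed (simp add: socle_generators_def)

lemma socle_generators_regular:
  assumes "semisimple TYPE('a::complex_banach_algebra_1)" "(x::'a) \<in> socle_generators"
  obtains c where "x * c * x = x"
proof (cases "x = 0")
  case True
  then show thesis using that by simp
next
  case False
  then obtain L where "minimal_left_ideal L" "x \<in> L"
    using assms(2) unfolding socle_generators_def by blast
  then show thesis
    using minimal_left_ideal_regular[OF assms(1)] that by blast
qed

lemma sum_list_mem_socle: "set xs \<subseteq> socle_generators \<Longrightarrow> sum_list xs \<in> socle"
proof (induction xs)
  case Nil
  show ?case unfolding socle_def by (auto intro!: exI[of _ "[]"])
next
  case (Cons x xs)
  then obtain ys where ys: "sum_list xs = sum_list ys" "\<forall>y\<in>set ys. \<exists>L. minimal_left_ideal L \<and> y \<in> L"
    unfolding socle_def by auto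
  show ?case
  proof (cases "x = 0")
    case True
    then show ?thesis using Cons by simp
  next
    case False
    then have "\<exists>L. minimal_left_ideal L \<and> x \<in> L"
      using Cons.prems unfolding socle_generators_def by auto
    with ys show ?thesis
      unfolding socle_def by (intro CollectI exI[of _ "x # ys"]) auto
  qed
qed

lemma socle_obtain_sum_list:
  assumes "s \<in> socle"
  obtains xs where "set xs \<subseteq> socle_generators" "sum_list xs = s"
  using assms unfolding socle_def socle_generators_def by blast

lemma zero_mem_socle: "0 \<in> socle"
  using sum_list_mem_socle[of "[]"] by simp

lemma socle_generators_subset_socle: "socle_generators \<subseteq> socle"
  using sum_list_mem_socle[of "[x]" for x] by auto

lemma socle_add:
  assumes "s \<in> socle" "t \<in> socle"
  shows "s + t \<in> socle"
proof -
  obtain xs ys where "set xs \<subseteq> socle_generators" "sum_list xs = s"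
    and "set ys \<subseteq> socle_generators" "sum_list ys = t"
    using assms by (meson socle_obtain_sum_list)
  then show ?thesis
    using sum_list_mem_socle[of "xs @ ys"] by simp
qed

lemma socle_mult_left:
  assumes "s \<in> socle"
  shows "a * s \<in> socle"
proof -
  obtain xs where xs: "set xs \<subseteq> socle_generators" "sum_list xs = s"
    using assms by (rule socle_obtain_sum_list)
  have "a * s = sum_list (map (\<lambda>x. a * x) xs)"
    using xs(2) sum_list_const_mult[of a "\<lambda>x. x" xs] by simp
  moreover have "set (map (\<lambda>x. a * x) xs) \<subseteq> socle_generators"
    using xs(1) socle_generators_mult_left by auto
  ultimately show ?thesis
    using sum_list_mem_socle[of "map (\<lambda>x. a * x) xs"] by simp
qed

lemma socle_diff: "s \<in> socle \<Longrightarrow> t \<in> socle \<Longrightarrow> s - t \<in> socle"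
  using socle_add[of s "(-1) * t"] socle_mult_left[of t "-1"] by simp

text \<open>The absorbed idempotent \<open>w\<close> satisfies \<open>w u = 0\<close>, which keeps \<open>u + w - u w\<close> idempotent.\<close>

lemma idempotent_right_unit_extend:
  fixes u z c :: "'a::ring_1"
  assumes u: "u * u = u" and c: "(z - z * u) * c * (z - z * u) = z - z * u"
  defines "w \<equiv> c * (z - z * u)"
  shows "(u + w - u * w) * (u + w - u * w) = u + w - u * w"
    and "z * (u + w - u * w) = z"
    and "y * u = y \<Longrightarrow> y * (u + w - u * w) = y"
proof -
  have "(z - z * u) * u = 0"
    by (simp add: algebra_simps u)
  then have wu: "w * u = 0"
    by (simp add: w_def mult.assoc)
  have ww: "w * w = w"
    using c by (simp add: w_def mult.assoc)
  have "(u + w - u * w) * u = u" "(u + w - u * w) * w = w"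
    using u wu ww by (simp_all add: algebra_simps)
  moreover have "(u + w - u * w) * (u + w - u * w)
      = (u + w - u * w) * u + (u + w - u * w) * w - (u + w - u * w) * u * w"
    by (simp only: distrib_left right_diff_distrib mult.assoc)
  ultimately show "(u + w - u * w) * (u + w - u * w) = u + w - u * w"
    by simp
  have "z * (u + w - u * w) = z * u + (z - z * u) * c * (z - z * u)"
    by (simp add: w_def algebra_simps)
  then show "z * (u + w - u * w) = z"
    using c by simp
  show "y * (u + w - u * w) = y" if "y * u = y"
  proof -
    have "y * (u + w - u * w) = y * u + y * w - y * u * w"
      by (simp only: distrib_left right_diff_distrib mult.assoc)
    with that show ?thesis
      by simp
  qed
qed

lemma idempotent_left_unit_extend:
  fixes v z c :: "'a::ring_1"
  assumes v: "v * v = v" and c: "(z - v * z) * c * (z - v * z) = z - v * z"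
  defines "w \<equiv> (z - v * z) * c"
  shows "(v + w - w * v) * (v + w - w * v) = v + w - w * v"
    and "(v + w - w * v) * z = z"
    and "v * y = y \<Longrightarrow> (v + w - w * v) * y = y"
proof -
  have "v * (z - v * z) = 0"
    by (simp add: algebra_simps v mult.assoc[symmetric])
  then have vw: "v * w = 0"
    by (simp add: w_def mult.assoc[symmetric])
  have ww: "w * w = w"
    using c by (simp add: w_def mult.assoc[symmetric])
  have "v * (v + w - w * v) = v" "w * (v + w - w * v) = w"
    using v vw ww by (simp_all add: algebra_simps mult.assoc[symmetric])
  moreover have "(v + w - w * v) * (v + w - w * v)
      = v * (v + w - w * v) + w * (v + w - w * v) - w * (v * (v + w - w * v))"
    by (simp only: distrib_right left_diff_distrib mult.assoc)
  ultimately show "(v + w - w * v) * (v + w - w * v) = v + w - w * v"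
    by simp
  have "(v + w - w * v) * z = v * z + (z - v * z) * c * (z - v * z)"
    by (simp add: w_def algebra_simps)
  then show "(v + w - w * v) * z = z"
    using c by simp
  show "(v + w - w * v) * y = y" if "v * y = y"
  proof -
    have "(v + w - w * v) * y = v * y + w * y - w * (v * y)"
      by (simp only: distrib_right left_diff_distrib mult.assoc)
    with that show ?thesis
      by simp
  qed
qed

lemma socle_right_unit:
  assumes ss: "semisimple TYPE('a::complex_banach_algebra_1)"
    and "finite Z" "Z \<subseteq> (socle_generators :: 'a set)"
  shows "\<exists>u\<in>socle. u * u = u \<and> (\<forall>z\<in>Z. z * u = z)"
  using assms(2,3)
proof (induction Z rule: finite_induct)
  case empty
  show ?case by (intro bexI[OF _ zero_mem_socle]) simp
next
  case (insert z Z)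
  then obtain u where u: "u \<in> socle" "u * u = u" "\<forall>y\<in>Z. y * u = y"
    by auto
  have "z - z * u = z * (1 - u)"
    by (simp add: algebra_simps)
  then have z': "z - z * u \<in> socle_generators"
    using insert.prems socle_generators_mult_right by auto
  then obtain c where c: "(z - z * u) * c * (z - z * u) = z - z * u"
    using socle_generators_regular[OF ss] by blast
  have "c * (z - z * u) \<in> socle"
    using z' socle_generators_mult_left socle_generators_subset_socle by blast
  then have "u + c * (z - z * u) - u * (c * (z - z * u)) \<in> socle"
    using socle_diff socle_add socle_mult_left u(1) by blast
  with idempotent_right_unit_extend[OF u(2) c] u(3) show ?case
    by auto
qed

lemma socle_left_unit:
  assumes ss: "semisimple TYPE('a::complex_banach_algebra_1)"
    and "finite Z" "Z \<subseteq> (socle_generators :: 'a set)"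
  shows "\<exists>v\<in>socle. v * v = v \<and> (\<forall>z\<in>Z. v * z = z)"
  using assms(2,3)
proof (induction Z rule: finite_induct)
  case empty
  show ?case by (intro bexI[OF _ zero_mem_socle]) simp
next
  case (insert z Z)
  then obtain v where v: "v \<in> socle" "v * v = v" "\<forall>y\<in>Z. v * y = y"
    by auto
  have "z - v * z = (1 - v) * z"
    by (simp add: algebra_simps)
  then have z': "z - v * z \<in> socle_generators"
    using insert.prems socle_generators_mult_left by auto
  then obtain c where c: "(z - v * z) * c * (z - v * z) = z - v * z"
    using socle_generators_regular[OF ss] by blast
  have "(z - v * z) * c \<in> socle"
    using z' socle_generators_mult_right socle_generators_subset_socle by blast
  then have "v + (z - v * z) * c - (z - v * z) * c * v \<in> socle"
    using socle_diff socle_add socle_mult_left v(1) by blast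
  with idempotent_left_unit_extend[OF v(2) c] v(3) show ?case
    by auto
qed

lemma sum_list_mult_right_fixed:
  fixes u :: "'a::ring"
  assumes "\<forall>x\<in>set xs. x * u = x"
  shows "sum_list xs * u = sum_list xs"
  using assms sum_list_mult_const[of "\<lambda>x. x" u xs] by (simp add: map_idI)

lemma sum_list_mult_left_fixed:
  fixes u :: "'a::ring"
  assumes "\<forall>x\<in>set xs. u * x = x"
  shows "u * sum_list xs = sum_list xs"
  using assms sum_list_const_mult[of u "\<lambda>x. x" xs] by (simp add: map_idI)

lemma socle_finite_subset_generated:
  assumes "finite K" "K \<subseteq> socle"
  shows "\<exists>Z. finite Z \<and> Z \<subseteq> socle_generators \<and>
    (\<forall>a\<in>K. \<exists>xs. set xs \<subseteq> Z \<and> sum_list xs = a)"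
  using assms
proof (induction K rule: finite_induct)
  case empty
  show ?case by (intro exI[of _ "{}"]) simp
next
  case (insert a K)
  then obtain Z where Z: "finite Z" "Z \<subseteq> socle_generators"
    "\<forall>b\<in>K. \<exists>xs. set xs \<subseteq> Z \<and> sum_list xs = b"
    by auto
  have "a \<in> socle"
    using insert.prems by simp
  then obtain xs where xs: "set xs \<subseteq> socle_generators" "sum_list xs = a"
    by (rule socle_obtain_sum_list)
  have "\<exists>ys. set ys \<subseteq> Z \<union> set xs \<and> sum_list ys = b" if b: "b \<in> insert a K" for b
  proof (cases "b = a")
    case True
    then show ?thesis using xs(2) by blast
  next
    case False
    then obtain ys where "set ys \<subseteq> Z" "sum_list ys = b"
      using b Z(3) by auto
    then show ?thesis by blast
  qed
  with Z(1,2) xs(1) show ?case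
    by (intro exI[of _ "Z \<union> set xs"]) simp
qed

lemma two_sided_unit_of_one_sided_units:
  fixes a u v :: "'a::ring"
  assumes "a * u = a" "v * a = a"
  shows "(u + v - u * v) * a = a" "a * (u + v - u * v) = a"
proof -
  have "(u + v - u * v) * a = u * a + v * a - u * (v * a)"
    by (simp add: algebra_simps)
  then show "(u + v - u * v) * a = a"
    using assms(2) by simp
  have "a * (u + v - u * v) = a * u + a * v - a * u * v"
    by (simp add: algebra_simps)
  then show "a * (u + v - u * v) = a"
    using assms(1) by simp
qed

lemma socle_local_unit:
  assumes ss: "semisimple TYPE('a::complex_banach_algebra_1)"
    and "finite K" "K \<subseteq> (socle :: 'a set)"
  shows "\<exists>p\<in>socle. \<forall>a\<in>K. p * a = a \<and> a * p = a"
proof -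
  obtain Z where Z: "finite Z" "Z \<subseteq> socle_generators"
    and K: "\<forall>a\<in>K. \<exists>xs. set xs \<subseteq> Z \<and> sum_list xs = a"
    using socle_finite_subset_generated[OF assms(2,3)] by (elim exE conjE)
  obtain u where u: "u \<in> socle" "\<forall>z\<in>Z. z * u = z"
    using socle_right_unit[OF ss Z] by blast
  obtain v where v: "v \<in> socle" "\<forall>z\<in>Z. v * z = z"
    using socle_left_unit[OF ss Z] by blast
  have "(u + v - u * v) * a = a \<and> a * (u + v - u * v) = a" if "a \<in> K" for a
  proof -
    obtain xs where "set xs \<subseteq> Z" and a: "sum_list xs = a"
      using K \<open>a \<in> K\<close> by blast
    then have "sum_list xs * u = sum_list xs" "v * sum_list xs = sum_list xs"
      using u(2) v(2) by (auto intro: sum_list_mult_right_fixed sum_list_mult_left_fixed)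
    then show ?thesis
      unfolding a using two_sided_unit_of_one_sided_units by blast
  qed
  moreover have "u + v - u * v \<in> socle"
    using socle_diff[OF socle_add[OF u(1) v(1)] socle_mult_left[OF v(1)]] .
  ultimately show ?thesis
    by blast
qed

lemma has_two_sided_approx_identity_if_local_units:
  fixes S :: "'a::complex_banach_algebra_1 set"
  assumes local_unit: "\<And>K. finite K \<Longrightarrow> K \<subseteq> S \<Longrightarrow> \<exists>e\<in>S. \<forall>a\<in>K. e * a = a \<and> a * e = a"
  shows "has_two_sided_approx_identity S"
proof -
  define p where "p K = (SOME e. e \<in> S \<and> (\<forall>a\<in>K. e * a = a \<and> a * e = a))" for K
  have p: "p K \<in> S \<and> (\<forall>a\<in>K. p K * a = a \<and> a * p K = a)" if "finite K" "K \<subseteq> S" for K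
  proof -
    have "\<exists>e. e \<in> S \<and> (\<forall>a\<in>K. e * a = a \<and> a * e = a)"
      using local_unit[OF that] by blast
    then show ?thesis
      unfolding p_def by (rule someI_ex)
  qed
  define F where "F = filtermap p (finite_subsets_at_top S)"
  have "eventually (\<lambda>K. p K \<in> S) (finite_subsets_at_top S)"
    using p by (intro eventually_finite_subsets_at_top_weakI) blast
  then have "eventually (\<lambda>e. e \<in> S) F"
    by (simp add: F_def eventually_filtermap)
  moreover have "F \<noteq> bot"
    by (simp add: F_def filtermap_bot_iff)
  moreover have "((\<lambda>e. e * a) \<longlongrightarrow> a) F \<and> ((\<lambda>e. a * e) \<longlongrightarrow> a) F" if "a \<in> S" for a
  proof -
    have "eventually (\<lambda>K. p K * a = a \<and> a * p K = a) (finite_subsets_at_top S)"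
      unfolding eventually_finite_subsets_at_top using that p
      by (intro exI[of _ "{a}"]) auto
    then have "eventually (\<lambda>e. e * a = a \<and> a * e = a) F"
      by (simp add: F_def eventually_filtermap)
    then show ?thesis
      by (auto intro: tendsto_eventually elim: eventually_mono)
  qed
  ultimately show ?thesis
    unfolding has_two_sided_approx_identity_def by blast
qed

theorem theorem1p7:
  assumes "semisimple TYPE('a::complex_banach_algebra_1)"
    and "(socle :: 'a set) \<noteq> {0}"
  shows "has_two_sided_approx_identity (socle :: 'a set)"
  using socle_local_unit[OF assms(1)] by (rule has_two_sided_approx_identity_if_local_units)

end
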